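(* There exist a constant $c>0$ and infinitely many $n\in\mathbb{N}$ such that for each of them there is a connected graph $G$ on $n$ vertices and vertices $a,b\in V(G)$ such that, in the geodesic-biased random walk on $G$ with target $b$ and excited set $\mathcal{X}=\{a\}$, started at $a$ (for any choice of the fixed shortest paths), \[\mathbb{E}[\tau_a(b,\{a\})]\ \ge\ c\,\exp\left(\frac{\sqrt[4]{n}\,\log n}{100}\right).\]
   Context: Geodesic-biased random walk: let $G$ be a finite connected graph, $b\in V(G)$ a target vertex and $\mathcal{X}\subseteq V(G)$ a set of excited vertices. For every vertex $x\neq b$ fix in advance one shortest path (geodesic) in $G$ from $x$ to $b$. A walker moves in discrete time: from an unexcited vertex ($x\notin\mathcal{X}$) she moves to a uniformly random neighbour of $x$; from an excited vertex ($x\in\mathcal{X}$) she moves deterministically to the next vertex on the fixed shortest path from $x$ to $b$. $\tau_a(b,\mathcal{X})$ denotes the first time the walker started at $a$ visits $b$. *)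

theory Defs
  imports "HOL-Probability.Probability"
begin

definition graph :: "'a set \<Rightarrow> ('a \<Rightarrow> 'a \<Rightarrow> bool) \<Rightarrow> bool" where
  "graph V E \<longleftrightarrow> finite V \<and> (\<forall>x y. E x y \<longrightarrow> x \<in> V \<and> y \<in> V)
     \<and> (\<forall>x y. E x y \<longrightarrow> E y x) \<and> (\<forall>x. \<not> E x x)"

definition connected_graph :: "'a set \<Rightarrow> ('a \<Rightarrow> 'a \<Rightarrow> bool) \<Rightarrow> bool" where
  "connected_graph V E \<longleftrightarrow> V \<noteq> {} \<and> (\<forall>x\<in>V. \<forall>y\<in>V. E\<^sup>*\<^sup>* x y)"

definition gdist :: "('a \<Rightarrow> 'a \<Rightarrow> bool) \<Rightarrow> 'a \<Rightarrow> 'a \<Rightarrow> nat" where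
  "gdist E x y = (LEAST k. (E ^^ k) x y)"

text \<open>A choice of fixed shortest paths to b, recorded by the next vertex on the
  chosen geodesic from each x \<noteq> b (only this first step is used by the walk).\<close>
definition geodesic_choice :: "'a set \<Rightarrow> ('a \<Rightarrow> 'a \<Rightarrow> bool) \<Rightarrow> 'a \<Rightarrow> ('a \<Rightarrow> 'a) \<Rightarrow> bool" where
  "geodesic_choice V E b nx \<longleftrightarrow>
     (\<forall>x\<in>V - {b}. E x (nx x) \<and> gdist E (nx x) b + 1 = gdist E x b)"

definition gb_step :: "('a \<Rightarrow> 'a \<Rightarrow> bool) \<Rightarrow> 'a \<Rightarrow> 'a set \<Rightarrow> ('a \<Rightarrow> 'a) \<Rightarrow> 'a \<Rightarrow> 'a pmf" where
  "gb_step E b X nx x =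
     (if x = b then return_pmf b
      else if x \<in> X then return_pmf (nx x)
      else pmf_of_set {y. E x y})"

fun gb_walk :: "('a \<Rightarrow> 'a \<Rightarrow> bool) \<Rightarrow> 'a \<Rightarrow> 'a set \<Rightarrow> ('a \<Rightarrow> 'a) \<Rightarrow> 'a \<Rightarrow> nat \<Rightarrow> 'a pmf" where
  "gb_walk E b X nx a 0 = return_pmf a"
| "gb_walk E b X nx a (Suc k) = bind_pmf (gb_walk E b X nx a k) (gb_step E b X nx)"

text \<open>Expected hitting time E[tau_a(b,X)] via the tail-sum formula
  E[tau] = sum_k P(tau > k); P(tau > k) = P(stopped walk at time k is not b).\<close>
definition expected_hitting_time ::
  "('a \<Rightarrow> 'a \<Rightarrow> bool) \<Rightarrow> 'a \<Rightarrow> 'a set \<Rightarrow> ('a \<Rightarrow> 'a) \<Rightarrow> 'a \<Rightarrow> ennreal" where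
  "expected_hitting_time E b X nx a =
     (\<Sum>k. ennreal (measure_pmf.prob (gb_walk E b X nx a k) {x. x \<noteq> b}))"

end

theory Submission
  imports Defs "HOL-Library.Countable"
begin

text \<open>Take a path \<open>Spine 0, \<dots>, Spine d\<close> from the target \<open>b = Spine 0\<close> to the start
  \<open>a = Spine d\<close> and, for every inner spine vertex, attach \<open>2d\<close> further paths of length \<open>d\<close>
  ending in \<open>a\<close>; the graph has \<open>n \<approx> 2d\<^sup>3\<close> vertices. Every vertex on these hairs is at
  distance \<open>d\<close> from \<open>b\<close>, so the geodesic step from \<open>a\<close> is forced to go along the spine.
  The potential equal to \<open>2\<^sup>-\<^sup>i\<close> at \<open>Spine i\<close> and interpolating linearly to \<open>0\<close> along each
  hair is superharmonic away from \<open>a\<close> and \<open>b\<close>, since from \<open>Spine i\<close> the walk steps back towards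
  \<open>b\<close> only with probability \<open>1/(2d + 2)\<close>. Only the excited step at \<open>a\<close> raises the expected
  potential, by \<open>2\<^sup>1\<^sup>-\<^sup>d\<close>, whereas at \<open>b\<close> the potential is \<open>1\<close>. Hence with probability at least
  \<open>1/2\<close> the walk has not hit \<open>b\<close> after \<open>2\<^sup>d\<^sup>-\<^sup>2\<close> steps, and
  \<open>E \<tau> \<ge> 2\<^sup>d\<^sup>-\<^sup>3 \<ge> exp (n\<^sup>1\<^sup>/\<^sup>4 log n / 100) / 8\<close>.\<close>

section \<open>Hitting times and potentials of bounded drift\<close>

lemma connected_graph_has_neighbour:
  assumes "connected_graph V E" "x \<in> V" "b \<in> V" "x \<noteq> b"
  obtains y where "E x y"
proof -
  have "E\<^sup>*\<^sup>* x b" using assms(1-3) by (simp add: connected_graph_def)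
  then show ?thesis
    using \<open>x \<noteq> b\<close> by (cases rule: converse_rtranclpE) (simp_all add: that)
qed

lemma set_pmf_gb_step_subset:
  assumes "graph V E" "connected_graph V E" "geodesic_choice V E b nx" "x \<in> V" "b \<in> V"
  shows "set_pmf (gb_step E b X nx x) \<subseteq> V"
proof (cases "x = b")
  case False
  have nbrs: "{y. E x y} \<subseteq> V"
    using assms(1) unfolding graph_def by blast
  moreover have "finite {y. E x y}"
    using assms(1) nbrs finite_subset unfolding graph_def by blast
  moreover have "{y. E x y} \<noteq> {}"
    using connected_graph_has_neighbour[OF assms(2,4,5) False] by blast
  moreover have "nx x \<in> V"
    using assms(3,4) nbrs False unfolding geodesic_choice_def by blast
  ultimately show ?thesis
    using False by (simp add: gb_step_def)
qed (simp add: gb_step_def assms(5))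

lemma set_pmf_gb_walk_subset:
  assumes "a \<in> V" "\<And>x. x \<in> V \<Longrightarrow> set_pmf (gb_step E b X nx x) \<subseteq> V"
  shows "set_pmf (gb_walk E b X nx a k) \<subseteq> V"
  using assms by (induction k) auto

lemma nn_integral_gb_walk_le:
  fixes f :: "'a \<Rightarrow> ennreal"
  assumes "a \<in> V"
    and step: "\<And>x. x \<in> V \<Longrightarrow> set_pmf (gb_step E b X nx x) \<subseteq> V"
    and drift: "\<And>x. x \<in> V \<Longrightarrow> (\<integral>\<^sup>+y. f y \<partial>gb_step E b X nx x) \<le> f x + \<delta>"
  shows "(\<integral>\<^sup>+y. f y \<partial>gb_walk E b X nx a k) \<le> f a + of_nat k * \<delta>"
proof (induction k)
  case 0
  then show ?case by simp
next
  case (Suc k)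
  let ?M = "measure_pmf (gb_walk E b X nx a k)"
  have "(\<integral>\<^sup>+y. f y \<partial>gb_walk E b X nx a (Suc k)) = (\<integral>\<^sup>+x. (\<integral>\<^sup>+y. f y \<partial>gb_step E b X nx x) \<partial>?M)"
    by simp
  also have "\<dots> \<le> (\<integral>\<^sup>+x. f x + \<delta> \<partial>?M)"
    using set_pmf_gb_walk_subset[OF assms(1) step] drift
    by (intro nn_integral_mono_AE AE_pmfI) blast
  also have "\<dots> = (\<integral>\<^sup>+x. f x \<partial>?M) + \<delta>"
    by (subst nn_integral_add) (auto simp: measure_pmf.emeasure_space_1)
  also have "\<dots> \<le> f a + of_nat k * \<delta> + \<delta>"
    using Suc by (simp add: add_right_mono)
  finally show ?case by (simp add: algebra_simps)
qed

lemma measure_pmf_prob_neq: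
  "measure_pmf.prob p {x. x \<noteq> b} = 1 - measure_pmf.prob p {b}"
proof -
  have "{x. x \<noteq> b} = UNIV - {b}" by auto
  then show ?thesis
    using measure_pmf.prob_compl[of "{b}" p] by simp
qed

lemma prob_gb_walk_not_target_ge:
  fixes f :: "'a \<Rightarrow> ennreal"
  assumes "a \<in> V"
    and "\<And>x. x \<in> V \<Longrightarrow> set_pmf (gb_step E b X nx x) \<subseteq> V"
    and "\<And>x. x \<in> V \<Longrightarrow> (\<integral>\<^sup>+y. f y \<partial>gb_step E b X nx x) \<le> f x + \<delta>"
    and "1 \<le> f b"
  shows "1 - (f a + of_nat k * \<delta>) \<le> ennreal (measure_pmf.prob (gb_walk E b X nx a k) {x. x \<noteq> b})"
proof -
  let ?p = "gb_walk E b X nx a k"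
  have "ennreal (measure_pmf.prob ?p {b}) = (\<integral>\<^sup>+y. indicator {b} y \<partial>?p)"
    by (simp add: measure_pmf.emeasure_eq_measure)
  also have "\<dots> \<le> (\<integral>\<^sup>+y. f y \<partial>?p)"
    using \<open>1 \<le> f b\<close> by (intro nn_integral_mono) (auto split: split_indicator)
  also have "\<dots> \<le> f a + of_nat k * \<delta>"
    by (rule nn_integral_gb_walk_le[OF assms(1-3)])
  finally have "1 - (f a + of_nat k * \<delta>) \<le> 1 - ennreal (measure_pmf.prob ?p {b})"
    by (rule ennreal_minus_mono[OF order_refl])
  also have "\<dots> = ennreal (measure_pmf.prob ?p {x. x \<noteq> b})"
    unfolding measure_pmf_prob_neq by (metis ennreal_1 ennreal_minus measure_nonneg)
  finally show ?thesis .
qed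

lemma expected_hitting_time_ge:
  fixes f :: "'a \<Rightarrow> ennreal"
  assumes "a \<in> V"
    and "\<And>x. x \<in> V \<Longrightarrow> set_pmf (gb_step E b X nx x) \<subseteq> V"
    and "\<And>x. x \<in> V \<Longrightarrow> (\<integral>\<^sup>+y. f y \<partial>gb_step E b X nx x) \<le> f x + \<delta>"
    and "1 \<le> f b"
  shows "of_nat K * (1 - (f a + of_nat K * \<delta>)) \<le> expected_hitting_time E b X nx a"
proof -
  let ?p = "\<lambda>k. ennreal (measure_pmf.prob (gb_walk E b X nx a k) {x. x \<noteq> b})"
  have "?p k \<ge> 1 - (f a + of_nat K * \<delta>)" if "k < K" for k
  proof -
    have "1 - (f a + of_nat K * \<delta>) \<le> 1 - (f a + of_nat k * \<delta>)"
      using that by (intro ennreal_minus_mono add_left_mono mult_right_mono) auto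
    also have "\<dots> \<le> ?p k"
      by (rule prob_gb_walk_not_target_ge[OF assms])
    finally show ?thesis .
  qed
  then have "of_nat K * (1 - (f a + of_nat K * \<delta>)) \<le> (\<Sum>k<K. ?p k)"
    using sum_mono[of "{..<K}" "\<lambda>_. 1 - (f a + of_nat K * \<delta>)" ?p] by simp
  also have "\<dots> \<le> (\<Sum>k. ?p k)"
    by (rule sum_le_suminf) auto
  finally show ?thesis
    by (simp add: expected_hitting_time_def)
qed


lemma nn_integral_pmf_of_set_le:
  fixes g :: "'a \<Rightarrow> real" and c :: real
  assumes "finite S" "S \<noteq> {}" "\<And>x. x \<in> S \<Longrightarrow> 0 \<le> g x" "(\<Sum>x\<in>S. g x) \<le> real (card S) * c"
  shows "(\<integral>\<^sup>+x. ennreal (g x) \<partial>pmf_of_set S) \<le> ennreal c"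
proof -
  have card: "0 < card S"
    using assms(1,2) by (simp add: card_gt_0_iff)
  have "(\<integral>\<^sup>+x. ennreal (g x) \<partial>pmf_of_set S) = ennreal (sum g S) / ennreal (real (card S))"
    using assms(1-3) by (simp add: nn_integral_pmf_of_set sum_ennreal ennreal_of_nat_eq_real_of_nat)
  also have "\<dots> = ennreal (sum g S / card S)"
    using assms(3) card by (intro divide_ennreal) (auto simp: sum_nonneg)
  also have "\<dots> \<le> ennreal c"
    using assms(4) card by (intro ennreal_leI) (simp add: divide_le_eq mult.commute)
  finally show ?thesis .
qed

section \<open>Graph distance\<close>

lemma relpowp_gdist:
  assumes "E\<^sup>*\<^sup>* x y"
  shows "(E ^^ gdist E x y) x y"
  unfolding gdist_def using assms by (metis LeastI rtranclp_power)

lemma gdist_le_relpowp: "(E ^^ k) x y \<Longrightarrow> gdist E x y \<le> k"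
  unfolding gdist_def by (rule Least_le)

lemma relpowp_lipschitz:
  fixes f :: "'a \<Rightarrow> nat"
  assumes lip: "\<And>u v. E u v \<Longrightarrow> f u \<le> f v + 1"
  shows "(E ^^ k) x y \<Longrightarrow> f x \<le> f y + k"
proof (induction k arbitrary: y)
  case 0
  then show ?case by simp
next
  case (Suc k)
  then obtain z where "(E ^^ k) x z" "E z y" by auto
  with Suc.IH lip[of z y] show ?case by fastforce
qed

lemma lipschitz_le_gdist:
  fixes f :: "'a \<Rightarrow> nat"
  assumes "\<And>u v. E u v \<Longrightarrow> f u \<le> f v + 1" "E\<^sup>*\<^sup>* x y"
  shows "f x \<le> f y + gdist E x y"
  using relpowp_lipschitz[OF assms(1) relpowp_gdist[OF assms(2)]] .

section \<open>The hairy path\<close>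

datatype hvertex = Spine nat | Hair nat nat nat

text \<open>The hairy path of depth \<open>d\<close>: the spine \<open>Spine 0, \<dots>, Spine d\<close>, and for \<open>0 < i < d\<close>
  and \<open>j < 2d\<close> a hair \<open>Spine i, Hair i j 1, \<dots>, Hair i j (d - 1), Spine d\<close>.\<close>

definition hair_vertex :: "nat \<Rightarrow> nat \<Rightarrow> nat \<Rightarrow> nat \<Rightarrow> hvertex" where
  "hair_vertex d i j t = (if t = 0 then Spine i else if t = d then Spine d else Hair i j t)"

definition hairy_vertices :: "nat \<Rightarrow> hvertex set" where
  "hairy_vertices d = {Spine i | i. i \<le> d} \<union>
     {Hair i j t | i j t. 1 \<le> i \<and> i < d \<and> j < 2*d \<and> 1 \<le> t \<and> t < d}"

definition hairy_arc :: "nat \<Rightarrow> hvertex \<Rightarrow> hvertex \<Rightarrow> bool" where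
  "hairy_arc d u v \<longleftrightarrow> (\<exists>i<d. u = Spine i \<and> v = Spine (Suc i)) \<or>
     (\<exists>i j. 1 \<le> i \<and> i < d \<and> j < 2*d \<and> u = Spine i \<and> v = Hair i j 1) \<or>
     (\<exists>i j t. 1 \<le> i \<and> i < d \<and> j < 2*d \<and> 1 \<le> t \<and> Suc t < d \<and> u = Hair i j t \<and> v = Hair i j (Suc t)) \<or>
     (\<exists>i j. 1 \<le> i \<and> i < d \<and> j < 2*d \<and> u = Hair i j (d - 1) \<and> v = Spine d)"

definition hairy_edge :: "nat \<Rightarrow> hvertex \<Rightarrow> hvertex \<Rightarrow> bool" where
  "hairy_edge d u v \<longleftrightarrow> hairy_arc d u v \<or> hairy_arc d v u"

lemma hairy_edge_sym: "hairy_edge d u v \<Longrightarrow> hairy_edge d v u"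
  by (auto simp: hairy_edge_def)

lemma hairy_edge_vertices: "hairy_edge d u v \<Longrightarrow> u \<in> hairy_vertices d \<and> v \<in> hairy_vertices d"
  unfolding hairy_edge_def hairy_arc_def hairy_vertices_def by auto

lemma hairy_edge_irrefl: "\<not> hairy_edge d u u"
  by (auto simp: hairy_edge_def hairy_arc_def)

lemma hairy_vertices_eq:
  "hairy_vertices d = Spine ` {..d} \<union> (\<lambda>(i, j, t). Hair i j t) ` ({1..<d} \<times> {..<2*d} \<times> {1..<d})"
  unfolding hairy_vertices_def by (auto simp: image_iff)

lemma finite_hairy_vertices: "finite (hairy_vertices d)"
  by (simp add: hairy_vertices_eq)

definition hairy_card :: "nat \<Rightarrow> nat" where
  "hairy_card d = (d + 1) + (d - 1) * (2*d) * (d - 1)"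

lemma card_hairy_vertices: "card (hairy_vertices d) = hairy_card d"
proof -
  have "card (hairy_vertices d) =
      card (Spine ` {..d}) + card ((\<lambda>(i, j, t). Hair i j t) ` ({1..<d} \<times> {..<2*d} \<times> {1..<d}))"
    unfolding hairy_vertices_eq by (rule card_Un_disjoint) auto
  also have "\<dots> = (d + 1) + card ({1..<d} \<times> {..<2*d} \<times> {1..<d})"
    by (subst card_image, simp add: inj_on_def, subst card_image, auto simp: inj_on_def)
  finally show ?thesis
    by (simp add: hairy_card_def card_cartesian_product)
qed

lemma hairy_neighbours_Spine:
  assumes "1 \<le> i" "i < d"
  shows "{w. hairy_edge d (Spine i) w} =
    insert (Spine (i - 1)) (insert (Spine (Suc i)) ((\<lambda>j. Hair i j 1) ` {..<2*d}))"
proof (rule set_eqI, rule iffI)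
  fix w assume "w \<in> {w. hairy_edge d (Spine i) w}"
  then show "w \<in> insert (Spine (i - 1)) (insert (Spine (Suc i)) ((\<lambda>j. Hair i j 1) ` {..<2*d}))"
    using assms unfolding hairy_edge_def hairy_arc_def by auto
next
  fix w assume w: "w \<in> insert (Spine (i - 1)) (insert (Spine (Suc i)) ((\<lambda>j. Hair i j 1) ` {..<2*d}))"
  have "hairy_arc d (Spine (i - 1)) (Spine i)"
    unfolding hairy_arc_def using assms by (intro disjI1 exI[of _ "i - 1"]) auto
  moreover have "hairy_arc d (Spine i) (Spine (Suc i))"
    unfolding hairy_arc_def using assms by auto
  moreover have "hairy_arc d (Spine i) (Hair i j 1)" if "j < 2*d" for j
    unfolding hairy_arc_def using assms that by auto
  ultimately show "w \<in> {w. hairy_edge d (Spine i) w}"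
    using w by (auto simp: hairy_edge_def)
qed

lemma hairy_neighbours_Hair:
  assumes "Hair i j t \<in> hairy_vertices d"
  shows "{w. hairy_edge d (Hair i j t) w} = {hair_vertex d i j (t - 1), hair_vertex d i j (Suc t)}"
proof (rule set_eqI, rule iffI)
  fix w assume "w \<in> {w. hairy_edge d (Hair i j t) w}"
  then show "w \<in> {hair_vertex d i j (t - 1), hair_vertex d i j (Suc t)}"
    using assms unfolding hairy_edge_def hairy_arc_def hairy_vertices_def hair_vertex_def by auto
next
  fix w assume w: "w \<in> {hair_vertex d i j (t - 1), hair_vertex d i j (Suc t)}"
  from assms have ijt: "1 \<le> i" "i < d" "j < 2*d" "1 \<le> t" "t < d"
    by (auto simp: hairy_vertices_def)
  have "hairy_arc d (hair_vertex d i j (t - 1)) (Hair i j t)"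
  proof (cases "t = 1")
    case False
    then show ?thesis
      using ijt unfolding hairy_arc_def hair_vertex_def
      by (intro disjI2 disjI2 disjI1 exI[of _ i] exI[of _ j] exI[of _ "t - 1"]) auto
  qed (use ijt in \<open>auto simp: hairy_arc_def hair_vertex_def\<close>)
  moreover have "hairy_arc d (Hair i j t) (hair_vertex d i j (Suc t))"
    using ijt unfolding hairy_arc_def hair_vertex_def by auto
  ultimately show "w \<in> {w. hairy_edge d (Hair i j t) w}"
    using w by (auto simp: hairy_edge_def)
qed

lemma hairy_neighbours_top:
  "hairy_edge d (Spine d) w \<Longrightarrow> w = Spine (d - 1) \<or> (\<exists>i j. 1 \<le> i \<and> i < d \<and> w = Hair i j (d - 1))"
  unfolding hairy_edge_def hairy_arc_def by auto

lemma hairy_spine_reaches_root: "i \<le> d \<Longrightarrow> (hairy_edge d ^^ i) (Spine i) (Spine 0)"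
proof (induction i)
  case (Suc i)
  have "hairy_edge d (Spine (Suc i)) (Spine i)"
    using Suc.prems by (simp add: hairy_edge_def hairy_arc_def)
  then show ?case
    using Suc by (intro relpowp_Suc_I2) auto
qed simp

lemma hairy_hair_reaches_spine:
  assumes "1 \<le> i" "i < d" "j < 2*d"
  shows "1 \<le> t \<Longrightarrow> t < d \<Longrightarrow> (hairy_edge d)\<^sup>*\<^sup>* (Hair i j t) (Spine i)"
proof (induction t)
  case (Suc t)
  show ?case
  proof (cases "t = 0")
    case True
    have "hairy_edge d (Hair i j 1) (Spine i)"
      using assms Suc.prems by (auto simp: hairy_edge_def hairy_arc_def)
    then show ?thesis using True by simp
  next
    case False
    have "hairy_edge d (Hair i j (Suc t)) (Hair i j t)"
      using assms Suc.prems False by (auto simp: hairy_edge_def hairy_arc_def)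
    with Suc False show ?thesis by (auto intro: converse_rtranclp_into_rtranclp)
  qed
qed simp

lemma hairy_vertex_reaches_root:
  assumes "v \<in> hairy_vertices d"
  shows "(hairy_edge d)\<^sup>*\<^sup>* v (Spine 0)"
proof -
  have spine: "(hairy_edge d)\<^sup>*\<^sup>* (Spine i) (Spine 0)" if "i \<le> d" for i
    using relpowp_imp_rtranclp[OF hairy_spine_reaches_root[OF that]] .
  show ?thesis
    using assms spine rtranclp_trans[OF hairy_hair_reaches_spine spine]
    unfolding hairy_vertices_def by fastforce
qed

fun level :: "nat \<Rightarrow> hvertex \<Rightarrow> nat" where
  "level d (Spine i) = i"
| "level d (Hair i j t) = min (i + t) d"

lemma level_hairy_edge: "hairy_edge d u v \<Longrightarrow> level d u \<le> level d v + 1"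
  unfolding hairy_edge_def hairy_arc_def by (elim disjE exE conjE) auto

instance hvertex :: countable
  by countable_datatype

definition hairy_V :: "nat \<Rightarrow> nat set" where
  "hairy_V d = to_nat ` hairy_vertices d"

definition hairy_E :: "nat \<Rightarrow> nat \<Rightarrow> nat \<Rightarrow> bool" where
  "hairy_E d u v \<longleftrightarrow> (\<exists>x y. u = to_nat x \<and> v = to_nat y \<and> hairy_edge d x y)"

lemma Spine_in_hairy_V [simp]: "to_nat (Spine i) \<in> hairy_V d \<longleftrightarrow> i \<le> d"
  unfolding hairy_V_def hairy_vertices_def by (auto dest: injD[OF inj_to_nat])

lemma hairy_E_to_nat [simp]: "hairy_E d (to_nat x) (to_nat y) = hairy_edge d x y"
  unfolding hairy_E_def by (auto dest: injD[OF inj_to_nat])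

lemma hairy_E_from_nat:
  "hairy_E d u v \<Longrightarrow> u = to_nat (from_nat u :: hvertex) \<and> v = to_nat (from_nat v :: hvertex) \<and>
     hairy_edge d (from_nat u) (from_nat v)"
  unfolding hairy_E_def by auto

lemma hairy_E_neighbours: "{y. hairy_E d (to_nat x) y} = to_nat ` {w. hairy_edge d x w}"
  unfolding hairy_E_def by (auto dest: injD[OF inj_to_nat])

lemma relpowp_hairy_E: "(hairy_edge d ^^ k) x y \<Longrightarrow> (hairy_E d ^^ k) (to_nat x) (to_nat y)"
  by (induction k arbitrary: y) (fastforce intro: relcomppI)+

lemma rtranclp_hairy_E: "(hairy_edge d)\<^sup>*\<^sup>* x y \<Longrightarrow> (hairy_E d)\<^sup>*\<^sup>* (to_nat x) (to_nat y)"
  by (metis relpowp_hairy_E rtranclp_power)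

lemma card_hairy_V: "card (hairy_V d) = hairy_card d"
  unfolding hairy_V_def by (simp add: card_image card_hairy_vertices)

lemma graph_hairy: "graph (hairy_V d) (hairy_E d)"
  unfolding graph_def hairy_V_def hairy_E_def
  using finite_hairy_vertices hairy_edge_vertices hairy_edge_sym hairy_edge_irrefl
  by (auto dest: injD[OF inj_to_nat])

lemma connected_graph_hairy: "connected_graph (hairy_V d) (hairy_E d)"
proof -
  have "(hairy_E d)\<^sup>*\<^sup>* (to_nat x) (to_nat y)"
    if "x \<in> hairy_vertices d" "y \<in> hairy_vertices d" for x y
  proof -
    have "symp (hairy_edge d)\<^sup>*\<^sup>*"
      by (intro symp_rtranclp sympI) (rule hairy_edge_sym)
    then have "(hairy_edge d)\<^sup>*\<^sup>* (Spine 0) y"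
      using hairy_vertex_reaches_root[OF that(2)] by (rule sympD)
    then show ?thesis
      using hairy_vertex_reaches_root[OF that(1)] by (intro rtranclp_hairy_E) (rule rtranclp_trans)
  qed
  moreover have "Spine 0 \<in> hairy_vertices d"
    by (simp add: hairy_vertices_def)
  ultimately show ?thesis
    unfolding connected_graph_def hairy_V_def by blast
qed

text \<open>The hair vertices next to \<open>Spine d\<close> have level \<open>d\<close>, and the level is \<open>1\<close>-Lipschitz, so
  they are not closer to the root than \<open>Spine d\<close> itself.\<close>

lemma geodesic_choice_hairy_top:
  assumes "2 \<le> d" "geodesic_choice (hairy_V d) (hairy_E d) (to_nat (Spine 0)) nx"
  shows "nx (to_nat (Spine d)) = to_nat (Spine (d - 1))"
proof -
  let ?a = "to_nat (Spine d)" and ?b = "to_nat (Spine 0)"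
  have "?a \<in> hairy_V d - {?b}"
    using assms(1) by (auto simp: hairy_V_def hairy_vertices_def)
  with assms(2) have step: "hairy_E d ?a (nx ?a)" "gdist (hairy_E d) (nx ?a) ?b + 1 = gdist (hairy_E d) ?a ?b"
    unfolding geodesic_choice_def by blast+
  define w :: hvertex where "w = from_nat (nx ?a)"
  have w: "nx ?a = to_nat w" "hairy_edge d (Spine d) w"
    using hairy_E_from_nat[OF step(1)] by (auto simp: w_def)
  have "gdist (hairy_E d) ?a ?b \<le> d"
    by (rule gdist_le_relpowp) (simp add: relpowp_hairy_E hairy_spine_reaches_root)
  moreover have "level d w \<le> gdist (hairy_E d) (to_nat w) ?b"
  proof -
    have lip: "level d (from_nat u) \<le> level d (from_nat v) + 1" if "hairy_E d u v" for u v
      using level_hairy_edge hairy_E_from_nat[OF that] by blast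
    have "w \<in> hairy_vertices d"
      using hairy_edge_vertices[OF w(2)] by simp
    then have "(hairy_E d)\<^sup>*\<^sup>* (to_nat w) ?b"
      using connected_graph_hairy by (auto simp: connected_graph_def hairy_V_def hairy_vertices_def)
    from lipschitz_le_gdist[where f = "\<lambda>u. level d (from_nat u)", OF lip this] show ?thesis by simp
  qed
  ultimately have "level d w < d"
    using step(2) w(1) by simp
  then show ?thesis
    using hairy_neighbours_top[OF w(2)] w(1) by auto
qed

section \<open>The potential\<close>

fun potential :: "nat \<Rightarrow> hvertex \<Rightarrow> real" where
  "potential d (Spine i) = (if i < d then (1/2)^i else 0)"
| "potential d (Hair i j t) = (1/2)^i * (1 - real t / real d)"

lemma potential_hair_vertex:
  "i < d \<Longrightarrow> t \<le> d \<Longrightarrow> potential d (hair_vertex d i j t) = (1/2)^i * (1 - real t / real d)"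
  by (auto simp: hair_vertex_def)

lemma potential_nonneg: "v \<in> hairy_vertices d \<Longrightarrow> 0 \<le> potential d v"
  by (auto simp: hairy_vertices_def)

text \<open>From \<open>Spine i\<close> the \<open>2d\<close> hairs lose \<open>2\<^sup>-\<^sup>i/d\<close> each, which pays for the gain
  \<open>2\<^sup>-\<^sup>i\<close> of stepping back to \<open>Spine (i - 1)\<close>.\<close>

lemma potential_neighbours_Spine:
  assumes "1 \<le> i" "i < d"
  shows "(\<Sum>w | hairy_edge d (Spine i) w. potential d w)
    \<le> card {w. hairy_edge d (Spine i) w} * potential d (Spine i)"
proof -
  define r :: real where "r = (1/2)^i"
  obtain k where k: "i = Suc k"
    using assms(1) by (cases i) auto
  have r: "0 < r" "potential d (Spine i) = r" "potential d (Spine (i - 1)) = 2 * r"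
    using assms by (auto simp: r_def k)
  have next_le: "potential d (Spine (Suc i)) \<le> r"
    using r(1) by (simp add: r_def)
  have hairs: "(\<Sum>w\<in>(\<lambda>j. Hair i j 1) ` {..<2*d}. potential d w) = 2 * d * (r * (1 - 1 / d))"
    by (subst sum.reindex) (auto simp: inj_on_def r_def)
  note N = hairy_neighbours_Spine[OF assms]
  have "(\<Sum>w | hairy_edge d (Spine i) w. potential d w)
      = 2 * r + potential d (Spine (Suc i)) + 2 * d * (r * (1 - 1 / d))"
    unfolding N using assms r hairs by (auto simp: image_iff)
  also have "\<dots> \<le> (2 * d + 2) * r"
    using next_le assms r(1) by (simp add: field_simps del: potential.simps)
  also have "card {w. hairy_edge d (Spine i) w} = 2 * d + 2"
    unfolding N using assms by (auto simp: image_iff card_image inj_on_def)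
  ultimately show ?thesis
    using r(2) by simp
qed

lemma potential_neighbours_Hair:
  assumes "Hair i j t \<in> hairy_vertices d"
  shows "(\<Sum>w | hairy_edge d (Hair i j t) w. potential d w)
    = card {w. hairy_edge d (Hair i j t) w} * potential d (Hair i j t)"
proof -
  from assms have ijt: "1 \<le> i" "i < d" "1 \<le> t" "t < d"
    by (auto simp: hairy_vertices_def)
  have ne: "hair_vertex d i j (t - 1) \<noteq> hair_vertex d i j (Suc t)"
    using ijt by (auto simp: hair_vertex_def)
  have "potential d (hair_vertex d i j (t - 1)) + potential d (hair_vertex d i j (Suc t))
      = 2 * potential d (Hair i j t)"
    using ijt by (simp add: potential_hair_vertex of_nat_diff field_simps)
  then show ?thesis
    unfolding hairy_neighbours_Hair[OF assms] using ne by simp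
qed

lemma potential_neighbours:
  assumes "v \<in> hairy_vertices d" "v \<noteq> Spine 0" "v \<noteq> Spine d"
  shows "(\<Sum>w | hairy_edge d v w. potential d w) \<le> card {w. hairy_edge d v w} * potential d v"
  using assms potential_neighbours_Spine potential_neighbours_Hair
  by (cases v) (auto simp: hairy_vertices_def)

lemma hairy_step_drift:
  assumes d: "2 \<le> d" and geo: "geodesic_choice (hairy_V d) (hairy_E d) (to_nat (Spine 0)) nx"
    and x: "x \<in> hairy_V d"
  shows "(\<integral>\<^sup>+y. ennreal (potential d (from_nat y))
            \<partial>gb_step (hairy_E d) (to_nat (Spine 0)) {to_nat (Spine d)} nx x)
         \<le> ennreal (potential d (from_nat x)) + ennreal ((1/2)^(d - 1))"
    (is "?I x \<le> _")
proof -
  obtain v where v: "x = to_nat v" "v \<in> hairy_vertices d"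
    using x by (auto simp: hairy_V_def)
  consider "v = Spine 0" | "v = Spine d" | "v \<noteq> Spine 0" "v \<noteq> Spine d"
    by blast
  then show ?thesis
  proof cases
    case 1
    then show ?thesis
      using v by (simp add: gb_step_def add_increasing2)
  next
    case 2
    then have "gb_step (hairy_E d) (to_nat (Spine 0)) {to_nat (Spine d)} nx x = return_pmf (to_nat (Spine (d - 1)))"
      using v d geodesic_choice_hairy_top[OF d geo] by (simp add: gb_step_def)
    then show ?thesis
      using v 2 d by simp
  next
    case 3
    let ?N = "{w. hairy_edge d v w}"
    have N: "{y. hairy_E d x y} = to_nat ` ?N"
      using v hairy_E_neighbours by simp
    have "x \<noteq> to_nat (Spine 0)" "x \<noteq> to_nat (Spine d)"
      using v 3 by auto
    moreover have "finite ?N"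
      using hairy_edge_vertices by (blast intro: finite_subset[OF _ finite_hairy_vertices])
    moreover have "?N \<noteq> {}"
    proof -
      have "to_nat (Spine 0) \<in> hairy_V d"
        by simp
      then obtain y where "hairy_E d x y"
        using connected_graph_has_neighbour[OF connected_graph_hairy x] \<open>x \<noteq> to_nat (Spine 0)\<close> by blast
      then show ?thesis
        using N by auto
    qed
    ultimately have "?I x = (\<integral>\<^sup>+y. ennreal (potential d (from_nat y)) \<partial>pmf_of_set (to_nat ` ?N))"
      by (simp add: gb_step_def N)
    also have "\<dots> \<le> ennreal (potential d v)"
    proof (rule nn_integral_pmf_of_set_le[where g = "\<lambda>y. potential d (from_nat y)"])
      show "(\<Sum>y\<in>to_nat ` ?N. potential d (from_nat y)) \<le> card (to_nat ` ?N) * potential d v"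
        using potential_neighbours[OF v(2) 3] by (simp add: sum.reindex card_image)
    qed (use \<open>finite ?N\<close> \<open>?N \<noteq> {}\<close> hairy_edge_vertices potential_nonneg in auto)
    finally show ?thesis
      using v by (simp add: add_increasing2)
  qed
qed

lemma hairy_expected_hitting_time_ge:
  assumes d: "2 \<le> d" and geo: "geodesic_choice (hairy_V d) (hairy_E d) (to_nat (Spine 0)) nx"
  shows "ennreal (2^d / 8)
    \<le> expected_hitting_time (hairy_E d) (to_nat (Spine 0)) {to_nat (Spine d)} nx (to_nat (Spine d))"
proof -
  define K :: nat where "K = 2^(d - 2)"
  obtain m where m: "d = m + 2"
    using d le_Suc_ex by (metis add.commute)
  have "of_nat K * ennreal ((1/2)^(d - 1)) = ennreal (real K * (1/2)^(d - 1))"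
    by (simp add: ennreal_of_nat_eq_real_of_nat ennreal_mult)
  also have "real K * (1/2)^(d - 1) = 1/2"
    by (simp add: K_def m power_one_over)
  finally have K_delta: "of_nat K * ennreal ((1/2)^(d - 1)) = ennreal (1/2)" .
  have "1 - ennreal (1/2) = ennreal (1/2)"
    using ennreal_minus[of "1/2" 1] by simp
  then have "of_nat K * (1 - ennreal (1/2)) = ennreal (real K * (1/2))"
    by (subst ennreal_mult) (auto simp: ennreal_of_nat_eq_real_of_nat)
  also have "real K * (1/2) = 2^d / 8"
    by (simp add: K_def m)
  finally have K_half: "of_nat K * (1 - ennreal (1/2)) = ennreal (2^d / 8)" .
  have in_V: "to_nat (Spine d) \<in> hairy_V d"
    by simp
  have "of_nat K * (1 - (ennreal (potential d (Spine d)) + of_nat K * ennreal ((1/2)^(d - 1))))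
    \<le> expected_hitting_time (hairy_E d) (to_nat (Spine 0)) {to_nat (Spine d)} nx (to_nat (Spine d))"
    using expected_hitting_time_ge[OF in_V
        set_pmf_gb_step_subset[OF graph_hairy connected_graph_hairy geo] hairy_step_drift[OF d geo]]
    using d by simp
  then show ?thesis
    using d K_delta K_half by simp
qed

section \<open>Size of the hairy path\<close>

lemma root4_mul_ln_le:
  fixes x :: real
  assumes "1 \<le> x"
  shows "root 4 x * ln x \<le> 12 * root 3 x"
proof -
  define u where "u = root 12 x"
  have u: "0 < u" "x = u ^ 12"
    using assms by (auto simp: u_def)
  have "x = (u ^ 3) ^ 4" "x = (u ^ 4) ^ 3"
    using u(2) by (simp_all flip: power_mult)
  then have "root 4 x = u ^ 3" "root 3 x = u ^ 4"
    using u(1) real_root_power_cancel[of 4 "u ^ 3"] real_root_power_cancel[of 3 "u ^ 4"] by simp_all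
  moreover have "ln x = 12 * ln u"
    using u by (simp add: ln_realpow)
  moreover have "u ^ 3 * ln u \<le> u ^ 4"
  proof -
    have "u ^ 3 * ln u \<le> u ^ 3 * u"
      using u(1) ln_le_minus_one[OF u(1)] by (intro mult_left_mono) auto
    then show ?thesis
      by (simp add: eval_nat_numeral)
  qed
  ultimately show ?thesis
    by simp
qed

lemma hairy_card_le:
  assumes "1 \<le> d"
  shows "hairy_card d \<le> (2 * d) ^ 3"
proof -
  from assms have "1 \<le> d * d"
    by (simp add: Suc_le_eq)
  then have "d \<le> d * (d * d)"
    using mult_le_mono2[of 1 "d * d" d] by simp
  then have "d + 1 \<le> 6 * (d * (d * d))"
    using assms by linarith
  moreover have "(d - 1) * (2 * d) * (d - 1) \<le> d * (2 * d) * d"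
    by (intro mult_le_mono) auto
  ultimately show ?thesis
    by (simp add: hairy_card_def power3_eq_cube algebra_simps)
qed

lemma exp_hairy_card_le:
  assumes "1 \<le> d"
  shows "exp (root 4 (hairy_card d) * ln (hairy_card d) / 100) \<le> 2 ^ d"
proof -
  have n: "1 \<le> real (hairy_card d)"
    by (simp add: hairy_card_def)
  have "root 3 (hairy_card d) \<le> root 3 ((2 * d) ^ 3)"
    using of_nat_mono[OF hairy_card_le[OF assms]] by (intro real_root_le_mono) simp_all
  also have "\<dots> = 2 * d"
    unfolding of_nat_power by (rule real_root_power_cancel) simp_all
  finally have "root 4 (hairy_card d) * ln (hairy_card d) \<le> 24 * d"
    using root4_mul_ln_le[OF n] by linarith
  then have "root 4 (hairy_card d) * ln (hairy_card d) / 100 \<le> d * (1/2)"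
    by (simp add: mult.commute)
  then have "exp (root 4 (hairy_card d) * ln (hairy_card d) / 100) \<le> exp (1/2) ^ d"
    by (simp add: exp_of_nat_mult[symmetric])
  also have "\<dots> \<le> 2 ^ d"
    by (intro power_mono exp_half_le2) simp
  finally show ?thesis .
qed

lemma strict_mono_hairy_card: "strict_mono hairy_card"
proof (rule strict_monoI)
  fix d d' :: nat
  assume "d < d'"
  then have "(d - 1) * (2 * d) * (d - 1) \<le> (d' - 1) * (2 * d') * (d' - 1)"
    by (intro mult_le_mono) auto
  with \<open>d < d'\<close> show "hairy_card d < hairy_card d'"
    by (simp add: hairy_card_def)
qed

theorem theorem1p1:
  shows "\<exists>c::real. c > 0 \<and> infinite {n::nat. \<exists>(V::nat set) E a b.
            graph V E \<and> connected_graph V E \<and> card V = n \<and> a \<in> V \<and> b \<in> V \<and>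
            (\<forall>nx. geodesic_choice V E b nx \<longrightarrow>
               ennreal (c * exp (root 4 (real n) * ln (real n) / 100))
                 \<le> expected_hitting_time E b {a} nx a)}"
    (is "\<exists>c. c > 0 \<and> infinite (?S c)")
proof (intro exI conjI)
  have "hairy_card d \<in> ?S (1/8)" if d: "2 \<le> d" for d
  proof -
    have "ennreal (1/8 * exp (root 4 (hairy_card d) * ln (hairy_card d) / 100))
        \<le> expected_hitting_time (hairy_E d) (to_nat (Spine 0)) {to_nat (Spine d)} nx (to_nat (Spine d))"
      if "geodesic_choice (hairy_V d) (hairy_E d) (to_nat (Spine 0)) nx" for nx
      using exp_hairy_card_le[of d] d
      by (intro order_trans[OF _ hairy_expected_hitting_time_ge[OF d that]] ennreal_leI) auto
    then show ?thesis
      using graph_hairy connected_graph_hairy card_hairy_V d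
      by (intro CollectI exI[of _ "hairy_V d"] exI[of _ "hairy_E d"] exI[of _ "to_nat (Spine d)"]
          exI[of _ "to_nat (Spine 0)"]) simp
  qed
  then have "hairy_card ` {2..} \<subseteq> ?S (1/8)"
    by auto
  moreover have "infinite (hairy_card ` {2..})"
    using strict_mono_imp_inj_on[OF strict_mono_hairy_card]
    by (auto dest: finite_imageD simp: infinite_Ici)
  ultimately show "infinite (?S (1/8))"
    using finite_subset by blast
qed simp

end
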